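(* Let $(\mathcal{X},\mathcal{A})$ be a measurable space and $\pi$ a probability distribution of a random pair $(X,Y)$ on $\mathcal{X}\times\{-1,1\}$. Let $1\le\kappa<+\infty$. Then $\pi$ satisfies the margin assumption $\mathrm{MA}(\kappa)$ if and only if $\pi$ satisfies the margin assumption for hinge risk $\mathrm{MAH}(\kappa)$.
   Context: Let $\eta(x)=\mathbb{P}(Y=1\mid X=x)$ and let $f^*(x)=\mathrm{sign}(2\eta(x)-1)$ be the Bayes rule. For a measurable $f:\mathcal{X}\to\{-1,1\}$, $R(f)=\mathbb{P}(Y\neq f(X))$ and $R^*=R(f^* )=\min_f R(f)$. For a measurable $f:\mathcal{X}\to\mathbb{R}$, the hinge risk is $A(f)=\mathbb{E}[\max(1-Yf(X),0)]$ and $A^*=\inf_{f:\mathcal{X}\to\mathbb{R}}A(f)$ (attained at $f^*$). $\pi$ satisfies $\mathrm{MA}(\kappa)$ if there exists $c_0>0$ such that $\mathbb{E}[|f(X)-f^*(X)|]\le c_0(R(f)-R^* )^{1/\kappa}$ for every measurable $f:\mathcal{X}\to\{-1,1\}$. $\pi$ satisfies $\mathrm{MAH}(\kappa)$ if there exists $c>0$ such that $\mathbb{E}[|f(X)-f^*(X)|]\le c(A(f)-A^* )^{1/\kappa}$ for every measurable $f:\mathcal{X}\to[-1,1]$. *)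

theory Defs
  imports "HOL-Probability.Probability"
begin

text \<open>Setting: M is the measurable space (X, A); P is a probability measure on
  X \<times> {-1,1} (labels encoded as the reals -1 and 1); the pair (X,Y) is (fst, snd).\<close>

definition marginal :: "('a \<times> real) measure \<Rightarrow> 'a measure \<Rightarrow> 'a measure" where
  "marginal P M = distr P M fst"

text \<open>eta(x) = P(Y = 1 | X = x), as the Radon-Nikodym derivative of
  A \<mapsto> P(X \<in> A, Y = 1) with respect to P_X.\<close>
definition eta :: "('a \<times> real) measure \<Rightarrow> 'a measure \<Rightarrow> 'a \<Rightarrow> real" where
  "eta P M = (\<lambda>x. enn2real (RN_deriv (marginal P M)
      (distr (density P (\<lambda>z. indicator {z. snd z = 1} z)) M fst) x))"

definition bayes :: "('a \<times> real) measure \<Rightarrow> 'a measure \<Rightarrow> 'a \<Rightarrow> real" where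
  "bayes P M = (\<lambda>x. if 2 * eta P M x - 1 \<ge> 0 then 1 else -1)"

definition risk :: "('a \<times> real) measure \<Rightarrow> ('a \<Rightarrow> real) \<Rightarrow> real" where
  "risk P f = measure P {z \<in> space P. snd z \<noteq> f (fst z)}"

definition bayes_risk :: "('a \<times> real) measure \<Rightarrow> 'a measure \<Rightarrow> real" where
  "bayes_risk P M = risk P (bayes P M)"

definition hinge_risk :: "('a \<times> real) measure \<Rightarrow> ('a \<Rightarrow> real) \<Rightarrow> ennreal" where
  "hinge_risk P f = (\<integral>\<^sup>+ z. ennreal (max (1 - snd z * f (fst z)) 0) \<partial>P)"

definition hinge_risk_opt :: "('a \<times> real) measure \<Rightarrow> 'a measure \<Rightarrow> ennreal" where
  "hinge_risk_opt P M = (INF f \<in> borel_measurable M. hinge_risk P f)"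

definition dist_bayes :: "('a \<times> real) measure \<Rightarrow> 'a measure \<Rightarrow> ('a \<Rightarrow> real) \<Rightarrow> real" where
  "dist_bayes P M f = (\<integral> z. \<bar>f (fst z) - bayes P M (fst z)\<bar> \<partial>P)"

definition MA :: "('a \<times> real) measure \<Rightarrow> 'a measure \<Rightarrow> real \<Rightarrow> bool" where
  "MA P M \<kappa> \<longleftrightarrow> (\<exists>c0>0. \<forall>f \<in> borel_measurable M.
      (\<forall>x \<in> space M. f x \<in> {-1, 1}) \<longrightarrow>
      dist_bayes P M f \<le> c0 * (risk P f - bayes_risk P M) powr (1 / \<kappa>))"

definition MAH :: "('a \<times> real) measure \<Rightarrow> 'a measure \<Rightarrow> real \<Rightarrow> bool" where
  "MAH P M \<kappa> \<longleftrightarrow> (\<exists>c>0. \<forall>f \<in> borel_measurable M.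
      (\<forall>x \<in> space M. f x \<in> {-1..1}) \<longrightarrow>
      dist_bayes P M f \<le> c * (enn2real (hinge_risk P f) - enn2real (hinge_risk_opt P M)) powr (1 / \<kappa>))"

end

theory Submission
  imports Defs
begin

text \<open>For a score f with values in [-1, 1] the hinge loss max (1 - Y f(X)) 0 equals 1 - Y f(X), so
  A(f) = 1 - E[(2 eta(X) - 1) f(X)]. Since (2 eta - 1) f \<le> |2 eta - 1| = (2 eta - 1) f*, clipping shows
  A* = A(f*), and the excess hinge risk is E[|2 eta(X) - 1| |f(X) - f*(X)|]; for a classifier f this is
  exactly twice R(f) - R*, which gives MAH(kappa) \<Longrightarrow> MA(kappa) at once.

  Conversely, MA(kappa) applied to the classifier that disagrees with f* exactly on a set S yields
  P_X(S) \<le> c (E[|2 eta(X) - 1| 1_S(X)])^(1/kappa). For 0 \<le> g \<le> 2 and t > 0 we have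
  E g \<le> E[|2 eta - 1| g] / t + 2 P_X(|2 eta - 1| \<le> t), and the set condition bounds the last term by a
  power of t; choosing t = (E[|2 eta - 1| g])^(1 - 1/kappa) (a small constant when kappa = 1) and
  g = |f - f*| gives MAH(kappa).\<close>

lemma powr_self_bound:
  fixes m t c p :: real
  assumes "0 \<le> m" "0 \<le> t" "0 < p" "p < 1" and m_le: "m \<le> c * (t * m) powr p"
  shows "m \<le> (c * t powr p) powr (1 / (1 - p))"
proof (cases "m = 0")
  case False
  then have m: "0 < m" using assms(1) by simp
  have "m powr (1 - p) * m powr p = m"
    using m by (simp flip: powr_add)
  also have "\<dots> \<le> (c * t powr p) * m powr p"
    using m_le assms(2) by (simp add: powr_mult)
  finally have "m powr (1 - p) \<le> c * t powr p"
    using m by simp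
  then have "(m powr (1 - p)) powr (1 / (1 - p)) \<le> (c * t powr p) powr (1 / (1 - p))"
    using assms(4) by (intro powr_mono2) auto
  then show ?thesis
    using m assms(4) by (simp add: powr_powr)
qed simp

context finite_measure
begin

lemma sublevel_measure_le:
  fixes a :: "'a \<Rightarrow> real"
  assumes [measurable]: "a \<in> borel_measurable M" and "integrable M a" "0 \<le> t" "0 < p" "0 \<le> c"
    and margin: "\<And>S. S \<in> sets M \<Longrightarrow> measure M S \<le> c * (\<integral>x. a x * indicator S x \<partial>M) powr p"
    and a_nonneg: "\<And>x. x \<in> space M \<Longrightarrow> 0 \<le> a x"
  defines "m \<equiv> measure M {x \<in> space M. a x \<le> t}"
  shows "m \<le> c * (t * m) powr p"
proof -
  define S where "S = {x \<in> space M. a x \<le> t}"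
  have S[measurable]: "S \<in> sets M" unfolding S_def by measurable
  have "(\<integral>x. a x * indicator S x \<partial>M) \<le> (\<integral>x. t * indicator S x \<partial>M)"
    using assms(2) by (intro integral_mono integrable_real_mult_indicator)
      (auto simp: S_def indicator_def)
  also have "\<dots> = t * m"
    by (simp add: S_def m_def)
  finally have "(\<integral>x. a x * indicator S x \<partial>M) powr p \<le> (t * m) powr p"
    using a_nonneg by (intro powr_mono2 integral_nonneg_AE) (auto simp: less_imp_le \<open>0 < p\<close> indicator_def)
  then show ?thesis
    using margin[OF S] \<open>0 \<le> c\<close> unfolding m_def S_def
    by (meson mult_left_mono order_trans)
qed

lemma integrable_mult_bounded:
  fixes a g :: "'a \<Rightarrow> real"
  assumes "integrable M a" "g \<in> borel_measurable M" "\<And>x. x \<in> space M \<Longrightarrow> \<bar>g x\<bar> \<le> B"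
  shows "integrable M (\<lambda>x. a x * g x)"
proof (rule Bochner_Integration.integrable_bound[of M "\<lambda>x. B * a x"])
  show "integrable M (\<lambda>x. B * a x)"
    using assms(1) by simp
  show "AE x in M. norm (a x * g x) \<le> norm (B * a x)"
  proof (intro AE_I2)
    fix x assume "x \<in> space M"
    then have "\<bar>a x\<bar> * \<bar>g x\<bar> \<le> \<bar>a x\<bar> * \<bar>B\<bar>"
      using assms(3) by (intro mult_left_mono) fastforce+
    then show "norm (a x * g x) \<le> norm (B * a x)"
      by (simp add: abs_mult mult.commute)
  qed
qed (use assms in measurable)

lemma integral_le_weighted_integral_plus_sublevel_measure:
  fixes a g :: "'a \<Rightarrow> real"
  assumes [measurable]: "a \<in> borel_measurable M" "g \<in> borel_measurable M" and "integrable M a" "0 < t"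
    and a_nonneg: "\<And>x. x \<in> space M \<Longrightarrow> 0 \<le> a x"
    and g_bounds: "\<And>x. x \<in> space M \<Longrightarrow> 0 \<le> g x \<and> g x \<le> B"
  shows "(\<integral>x. g x \<partial>M) \<le> (\<integral>x. a x * g x \<partial>M) / t + B * measure M {x \<in> space M. a x \<le> t}"
proof -
  define S where "S = {x \<in> space M. a x \<le> t}"
  have S[measurable]: "S \<in> sets M" unfolding S_def by measurable
  have ag: "integrable M (\<lambda>x. a x * g x)"
    using g_bounds by (intro integrable_mult_bounded[OF \<open>integrable M a\<close>, where B=B]) auto
  have "(\<integral>x. g x \<partial>M) \<le> (\<integral>x. a x * g x / t + B * indicator S x \<partial>M)"
  proof (rule integral_mono)
    show "integrable M g"
      using g_bounds by (intro integrable_const_bound[where B=B]) auto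
    show "integrable M (\<lambda>x. a x * g x / t + B * indicator S x)"
      using ag by (intro Bochner_Integration.integrable_add integrable_divide_zero integrable_mult_right integrable_real_indicator) (auto simp: less_top[symmetric])
    fix x assume x: "x \<in> space M"
    show "g x \<le> a x * g x / t + B * indicator S x"
    proof (cases "x \<in> S")
      case True
      moreover have "0 \<le> a x * g x / t"
        using g_bounds[OF x] a_nonneg[OF x] \<open>0 < t\<close> by simp
      ultimately show ?thesis using g_bounds[OF x] by simp
    next
      case False
      then have "1 * g x \<le> (a x / t) * g x"
        using x g_bounds[OF x] \<open>0 < t\<close> by (intro mult_right_mono) (auto simp: S_def)
      then show ?thesis using False by simp
    qed
  qed
  also have "\<dots> = (\<integral>x. a x * g x \<partial>M) / t + B * measure M S"
    using ag by (simp add: less_top[symmetric])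
  finally show ?thesis unfolding S_def .
qed

lemma integral_eq_0_if_weighted_integral_eq_0:
  fixes a g :: "'a \<Rightarrow> real"
  assumes [measurable]: "a \<in> borel_measurable M" "g \<in> borel_measurable M"
    and "integrable M (\<lambda>x. a x * g x)" "(\<integral>x. a x * g x \<partial>M) = 0"
    and "measure M {x \<in> space M. a x \<le> 0} = 0"
    and a_nonneg: "\<And>x. x \<in> space M \<Longrightarrow> 0 \<le> a x"
    and g_nonneg: "\<And>x. x \<in> space M \<Longrightarrow> 0 \<le> g x"
  shows "(\<integral>x. g x \<partial>M) = 0"
proof -
  have "AE x in M. a x * g x = 0"
    using assms(3,4) a_nonneg g_nonneg by (subst integral_nonneg_eq_0_iff_AE[symmetric]) auto
  moreover have "AE x in M. 0 < a x"
    using assms(5) by (subst AE_iff_measurable[OF _ refl]) (auto simp: not_less emeasure_eq_measure)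
  ultimately have "AE x in M. g x = 0"
    by eventually_elim simp
  then show ?thesis
    by (simp add: integral_eq_zero_AE)
qed

lemma set_margin_imp_bounded_margin:
  fixes a :: "'a \<Rightarrow> real"
  assumes [measurable]: "a \<in> borel_measurable M" and "integrable M a"
    and "0 < p" "p \<le> 1" "0 < c" "0 \<le> B"
    and a_nonneg: "\<And>x. x \<in> space M \<Longrightarrow> 0 \<le> a x"
    and margin: "\<And>S. S \<in> sets M \<Longrightarrow> measure M S \<le> c * (\<integral>x. a x * indicator S x \<partial>M) powr p"
  obtains C where "0 < C"
    and "\<And>g. g \<in> borel_measurable M \<Longrightarrow> (\<And>x. x \<in> space M \<Longrightarrow> 0 \<le> g x \<and> g x \<le> B) \<Longrightarrow>
      (\<integral>x. g x \<partial>M) \<le> C * (\<integral>x. a x * g x \<partial>M) powr p"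
proof
  define m where "m t = measure M {x \<in> space M. a x \<le> t}" for t
  have sublevel: "m t \<le> c * (t * m t) powr p" if "0 \<le> t" for t
    unfolding m_def using assms that by (intro sublevel_measure_le) auto
  have "m 0 \<le> 0"
    using sublevel[of 0] by simp
  then have m0: "m 0 = 0"
    unfolding m_def by (simp add: order_antisym)
  define C where "C = (if p = 1 then 2 * c else 1 + B * c powr (1 / (1 - p)))"
  show "0 < C"
    unfolding C_def using \<open>0 < c\<close> \<open>0 \<le> B\<close> by (simp add: add_pos_nonneg)
  fix g :: "'a \<Rightarrow> real"
  assume g[measurable]: "g \<in> borel_measurable M" and g_bounds: "\<And>x. x \<in> space M \<Longrightarrow> 0 \<le> g x \<and> g x \<le> B"
  define D where "D = (\<integral>x. a x * g x \<partial>M)"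
  have ag: "integrable M (\<lambda>x. a x * g x)"
    using g_bounds by (intro integrable_mult_bounded[OF \<open>integrable M a\<close>, where B=B]) auto
  have "0 \<le> D"
    unfolding D_def using a_nonneg g_bounds by (intro integral_nonneg_AE AE_I2) auto
  have tail: "(\<integral>x. g x \<partial>M) \<le> D / t + B * m t" if "0 < t" for t
    unfolding D_def m_def using assms g_bounds that
    by (intro integral_le_weighted_integral_plus_sublevel_measure) auto
  show "(\<integral>x. g x \<partial>M) \<le> C * D powr p"
  proof (cases "D = 0")
    case True
    have "(\<integral>x. g x \<partial>M) = 0"
    proof (rule integral_eq_0_if_weighted_integral_eq_0[OF assms(1) g ag])
      show "(\<integral>x. a x * g x \<partial>M) = 0" using True by (simp add: D_def)
      show "measure M {x \<in> space M. a x \<le> 0} = 0" using m0 by (simp add: m_def)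
    qed (use a_nonneg g_bounds in auto)
    then show ?thesis using True by simp
  next
    case False
    then have "0 < D" using \<open>0 \<le> D\<close> by simp
    show ?thesis
    proof (cases "p = 1")
      case True
      define t where "t = 1 / (2 * c)"
      have "m t \<le> m t / 2"
        using sublevel[of t] True \<open>0 < c\<close> by (simp add: t_def)
      then have "m t = 0"
        unfolding m_def by (simp add: order_antisym)
      then show ?thesis
        using tail[of t] True \<open>0 < c\<close> \<open>0 < D\<close> by (simp add: t_def C_def mult_ac)
    next
      case False
      define q where "q = 1 - p"
      have "0 < q" "p + q = 1"
        using False \<open>p \<le> 1\<close> by (auto simp: q_def)
      define t where "t = D powr q"
        \<comment> \<open>makes D / t and the bound c powr (1 / q) * t powr (p / q) on m t both multiples of D powr p\<close>
      have "0 < t" using \<open>0 < D\<close> by (simp add: t_def)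
      have "D / t = D powr p"
        using \<open>0 < D\<close> \<open>p + q = 1\<close> by (simp add: t_def divide_eq_eq flip: powr_add)
      have "m t \<le> (c * t powr p) powr (1 / q)"
        unfolding q_def using sublevel \<open>0 < t\<close> \<open>0 < p\<close> \<open>0 < q\<close>
        by (intro powr_self_bound) (auto simp: m_def q_def)
      also have "\<dots> = c powr (1 / q) * D powr p"
        using \<open>0 < q\<close> by (simp add: t_def powr_mult powr_powr)
      finally have "B * m t \<le> B * (c powr (1 / q) * D powr p)"
        using \<open>0 \<le> B\<close> by (rule mult_left_mono)
      then have "(\<integral>x. g x \<partial>M) \<le> (1 + B * c powr (1 / q)) * D powr p"
        using tail[OF \<open>0 < t\<close>] \<open>D / t = D powr p\<close> by (simp add: algebra_simps)
      then show ?thesis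
        using False by (simp add: C_def q_def)
    qed
  qed
qed

end

locale binary_classification =
  fixes M :: "'a measure" and P :: "('a \<times> real) measure"
  assumes prob_space_P: "prob_space P"
    and sets_P: "sets P = sets (M \<Otimes>\<^sub>M count_space {-1, 1})"
begin

interpretation P: prob_space P
  by (rule prob_space_P)

lemma space_P: "space P = space M \<times> {-1, 1}"
  using sets_eq_imp_space_eq[OF sets_P] by (simp add: space_pair_measure)

lemma fst_in_space_M: "z \<in> space P \<Longrightarrow> fst z \<in> space M"
  by (auto simp: space_P)

lemma snd_cases: "z \<in> space P \<Longrightarrow> snd z = -1 \<or> snd z = 1"
  by (auto simp: space_P)

lemma measurable_fst_P[measurable]: "fst \<in> measurable P M"
  using measurable_cong_sets[OF sets_P refl] measurable_fst by blast

lemma measurable_snd_P[measurable]: "snd \<in> borel_measurable P"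
proof -
  have "snd \<in> measurable P (count_space {-1, 1})"
    using measurable_cong_sets[OF sets_P refl] measurable_snd by blast
  from measurable_compose[OF this, of id borel] show ?thesis
    by simp
qed

abbreviation "PX \<equiv> marginal P M"

abbreviation "P_pos \<equiv> distr (density P (indicator {z. snd z = 1})) M fst"

abbreviation "\<eta> \<equiv> eta P M"

lemma sets_PX[simp, measurable_cong]: "sets PX = sets M"
  by (simp add: marginal_def)

lemma space_PX[simp]: "space PX = space M"
  by (simp add: marginal_def)

lemma prob_space_PX: "prob_space PX"
  unfolding marginal_def by (rule P.prob_space_distr) simp

interpretation PX: prob_space PX
  by (rule prob_space_PX)

lemma measurable_indicator_pos[measurable]:
  "(indicator {z. snd z = 1} :: _ \<Rightarrow> 'b::{zero_neq_one, topological_space}) \<in> borel_measurable P"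
proof -
  have "{z \<in> space P. snd z = 1} \<in> sets P"
    by measurable
  then show ?thesis
    by (simp add: borel_measurable_indicator_iff Int_commute Collect_conj_eq)
qed

lemma emeasure_P_pos_le: "A \<in> sets M \<Longrightarrow> emeasure P_pos A \<le> emeasure PX A"
proof -
  assume [measurable]: "A \<in> sets M"
  have "emeasure P_pos A = (\<integral>\<^sup>+ z. indicator {z. snd z = 1} z * indicator (fst -` A \<inter> space P) z \<partial>P)"
    by (simp add: emeasure_distr emeasure_density)
  also have "\<dots> \<le> (\<integral>\<^sup>+ z. indicator (fst -` A \<inter> space P) z \<partial>P)"
    by (intro nn_integral_mono) (auto simp: indicator_def)
  also have "\<dots> = emeasure PX A"
    by (simp add: marginal_def emeasure_distr)
  finally show ?thesis .
qed

lemma finite_measure_P_pos: "finite_measure P_pos"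
proof
  have "emeasure P_pos (space P_pos) \<le> emeasure PX (space M)"
    using emeasure_P_pos_le[of "space M"] by simp
  then show "emeasure P_pos (space P_pos) \<noteq> \<infinity>"
    by (auto simp: PX.emeasure_space_1[simplified] top_unique)
qed

interpretation P_pos: finite_measure P_pos
  by (rule finite_measure_P_pos)

lemma absolutely_continuous_P_pos: "absolutely_continuous PX P_pos"
  unfolding absolutely_continuous_def
proof
  fix A assume "A \<in> null_sets PX"
  then show "A \<in> null_sets P_pos"
    using emeasure_P_pos_le[of A] by (auto simp: null_sets_def)
qed

lemma eta_eq_RN_deriv: "\<eta> x = enn2real (RN_deriv PX P_pos x)"
  by (simp add: eta_def)

lemma integral_marginal:
  fixes v :: "'a \<Rightarrow> real"
  assumes "v \<in> borel_measurable M"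
  shows "(\<integral>x. v x \<partial>PX) = (\<integral>z. v (fst z) \<partial>P)"
  unfolding marginal_def using assms by (intro integral_distr) simp_all

lemma integral_label_mult:
  fixes v :: "'a \<Rightarrow> real"
  assumes v[measurable]: "v \<in> borel_measurable M" and v_range: "\<And>x. x \<in> space M \<Longrightarrow> v x \<in> {-B..B}"
  shows "integrable PX (\<lambda>x. \<eta> x * v x)"
    and "(\<integral>z. snd z * v (fst z) \<partial>P) = (\<integral>x. (2 * \<eta> x - 1) * v x \<partial>PX)"
proof -
  have v_bound: "\<bar>v x\<bar> \<le> B" if "x \<in> space M" for x
    using v_range[OF that] by auto
  have "sets P_pos = sets PX" "v \<in> borel_measurable PX"
    by simp_all
  note RN = PX.RN_deriv_integrable[OF P_pos.sigma_finite_measure absolutely_continuous_P_pos this]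
    PX.RN_deriv_integral[OF P_pos.sigma_finite_measure absolutely_continuous_P_pos this]
  have "integrable P_pos v"
    using v_bound by (intro P_pos.integrable_const_bound[where B=B]) auto
  then show \<eta>v: "integrable PX (\<lambda>x. \<eta> x * v x)"
    using RN(1) by (simp add: eta_eq_RN_deriv)
  have vX: "integrable PX v"
    using v_bound by (intro PX.integrable_const_bound[where B=B]) auto
  have vP: "integrable P (\<lambda>z. v (fst z))"
    using v_bound fst_in_space_M by (intro P.integrable_const_bound[where B=B]) auto
  have pos_vP: "integrable P (\<lambda>z. indicator {z. snd z = 1} z * v (fst z))"
  proof (rule P.integrable_const_bound[where B="\<bar>B\<bar>"])
    show "AE z in P. norm (indicator {z. snd z = 1} z * v (fst z)) \<le> \<bar>B\<bar>"
      using v_bound fst_in_space_M by (intro AE_I2) (fastforce simp: indicator_def)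
  qed measurable
  have "(\<integral>x. \<eta> x * v x \<partial>PX) = (\<integral>x. v x \<partial>P_pos)"
    using RN(2) by (simp add: eta_eq_RN_deriv)
  also have "\<dots> = (\<integral>z. v (fst z) \<partial>density P (\<lambda>z. ennreal (indicator {z. snd z = 1} z)))"
    by (simp add: integral_distr ennreal_indicator)
  also have "\<dots> = (\<integral>z. indicator {z. snd z = 1} z * v (fst z) \<partial>P)"
    by (subst integral_density) auto
  finally have pos: "(\<integral>z. indicator {z. snd z = 1} z * v (fst z) \<partial>P) = (\<integral>x. \<eta> x * v x \<partial>PX)" ..
  have "(\<integral>z. snd z * v (fst z) \<partial>P) = (\<integral>z. 2 * (indicator {z. snd z = 1} z * v (fst z)) - v (fst z) \<partial>P)"
    by (intro Bochner_Integration.integral_cong) (auto simp: indicator_def dest: snd_cases)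
  also have "\<dots> = 2 * (\<integral>x. \<eta> x * v x \<partial>PX) - (\<integral>x. v x \<partial>PX)"
    using vP pos_vP by (simp add: pos integral_marginal)
  also have "\<dots> = (\<integral>x. (2 * \<eta> x - 1) * v x \<partial>PX)"
    using \<eta>v vX by (simp add: left_diff_distrib mult.assoc)
  finally show "(\<integral>z. snd z * v (fst z) \<partial>P) = (\<integral>x. (2 * \<eta> x - 1) * v x \<partial>PX)" .
qed

lemma integrable_margin_mult:
  fixes v :: "'a \<Rightarrow> real"
  assumes v[measurable]: "v \<in> borel_measurable M" and v_range: "\<And>x. x \<in> space M \<Longrightarrow> v x \<in> {-B..B}"
  shows "integrable PX (\<lambda>x. (2 * \<eta> x - 1) * v x)"
proof -
  have "\<bar>v x\<bar> \<le> B" if "x \<in> space PX" for x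
    using v_range[of x] that by auto
  then have "integrable PX v"
    by (intro PX.integrable_const_bound[where B=B] AE_I2) auto
  with integral_label_mult(1)[OF v v_range] show ?thesis
    by (simp add: left_diff_distrib mult.assoc)
qed

lemma integrable_abs_margin: "integrable PX (\<lambda>x. \<bar>2 * \<eta> x - 1\<bar>)"
  using integrable_margin_mult[of "\<lambda>_. 1" 1] by simp

lemma measurable_eta[measurable]: "\<eta> \<in> borel_measurable M"
  unfolding eta_def by measurable

lemma measurable_bayes[measurable]: "bayes P M \<in> borel_measurable M"
  unfolding bayes_def by measurable

lemma bayes_in_labels: "bayes P M x \<in> {-1, 1}"
  by (simp add: bayes_def)

lemma bayes_range: "bayes P M x \<in> {-1..1}"
  using bayes_in_labels[of x] by auto

lemma abs_margin_mult_dist_bayes: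
  assumes "-1 \<le> y" "y \<le> 1"
  shows "\<bar>2 * \<eta> x - 1\<bar> * \<bar>y - bayes P M x\<bar> = (2 * \<eta> x - 1) * (bayes P M x - y)"
  using assms by (auto simp: bayes_def abs_if algebra_simps)

lemma hinge_risk_eq_integral:
  assumes [measurable]: "f \<in> borel_measurable M" and f_range: "\<And>x. x \<in> space M \<Longrightarrow> f x \<in> {-1..1}"
  shows "hinge_risk P f = ennreal (\<integral>z. 1 - snd z * f (fst z) \<partial>P)"
    and "0 \<le> (\<integral>z. 1 - snd z * f (fst z) \<partial>P)"
proof -
  have loss_bounds: "0 \<le> 1 - snd z * f (fst z) \<and> 1 - snd z * f (fst z) \<le> 2" if "z \<in> space P" for z
    using snd_cases[OF that] f_range[OF fst_in_space_M[OF that]] by auto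
  have "integrable P (\<lambda>z. 1 - snd z * f (fst z))"
    using loss_bounds by (intro P.integrable_const_bound[where B=2]) auto
  then have "(\<integral>\<^sup>+ z. ennreal (1 - snd z * f (fst z)) \<partial>P) = ennreal (\<integral>z. 1 - snd z * f (fst z) \<partial>P)"
    using loss_bounds by (intro nn_integral_eq_integral AE_I2) auto
  moreover have "hinge_risk P f = (\<integral>\<^sup>+ z. ennreal (1 - snd z * f (fst z)) \<partial>P)"
    unfolding hinge_risk_def using loss_bounds by (intro nn_integral_cong) simp
  ultimately show "hinge_risk P f = ennreal (\<integral>z. 1 - snd z * f (fst z) \<partial>P)"
    by simp
  show "0 \<le> (\<integral>z. 1 - snd z * f (fst z) \<partial>P)"
    using loss_bounds by (intro integral_nonneg_AE AE_I2) auto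
qed

lemma integral_hinge_loss:
  assumes [measurable]: "f \<in> borel_measurable M" and f_range: "\<And>x. x \<in> space M \<Longrightarrow> f x \<in> {-1..1}"
  shows "(\<integral>z. 1 - snd z * f (fst z) \<partial>P) = 1 - (\<integral>x. (2 * \<eta> x - 1) * f x \<partial>PX)"
proof -
  have "\<bar>snd z * f (fst z)\<bar> \<le> 1" if "z \<in> space P" for z
    using snd_cases[OF that] f_range[OF fst_in_space_M[OF that]] by auto
  then have "integrable P (\<lambda>z. snd z * f (fst z))"
    by (intro P.integrable_const_bound[where B=1]) auto
  then show ?thesis
    using integral_label_mult(2)[OF assms(1) f_range] by (simp add: P.prob_space)
qed

lemma enn2real_hinge_risk:
  assumes "f \<in> borel_measurable M" and "\<And>x. x \<in> space M \<Longrightarrow> f x \<in> {-1..1}"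
  shows "enn2real (hinge_risk P f) = 1 - (\<integral>x. (2 * \<eta> x - 1) * f x \<partial>PX)"
  using hinge_risk_eq_integral[OF assms] integral_hinge_loss[OF assms] by simp

lemma margin_mult_le_margin_mult_bayes:
  assumes "-1 \<le> y" "y \<le> 1"
  shows "(2 * \<eta> x - 1) * y \<le> (2 * \<eta> x - 1) * bayes P M x"
proof -
  have "0 \<le> \<bar>2 * \<eta> x - 1\<bar> * \<bar>y - bayes P M x\<bar>"
    by simp
  then show ?thesis
    by (simp add: abs_margin_mult_dist_bayes[OF assms] right_diff_distrib)
qed

lemma hinge_risk_bayes_le:
  assumes [measurable]: "f \<in> borel_measurable M" and f_range: "\<And>x. x \<in> space M \<Longrightarrow> f x \<in> {-1..1}"
  shows "hinge_risk P (bayes P M) \<le> hinge_risk P f"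
proof -
  have "(\<integral>x. (2 * \<eta> x - 1) * f x \<partial>PX) \<le> (\<integral>x. (2 * \<eta> x - 1) * bayes P M x \<partial>PX)"
  proof (rule integral_mono)
    show "integrable PX (\<lambda>x. (2 * \<eta> x - 1) * f x)"
      using f_range by (intro integrable_margin_mult[where B=1]) auto
    show "integrable PX (\<lambda>x. (2 * \<eta> x - 1) * bayes P M x)"
      using bayes_range by (intro integrable_margin_mult[where B=1]) auto
    show "(2 * \<eta> x - 1) * f x \<le> (2 * \<eta> x - 1) * bayes P M x" if "x \<in> space PX" for x
      using f_range[of x] that by (intro margin_mult_le_margin_mult_bayes) auto
  qed
  then show ?thesis
    using hinge_risk_eq_integral(1)[OF assms] integral_hinge_loss[OF assms]
      hinge_risk_eq_integral(1)[of "bayes P M"] integral_hinge_loss[of "bayes P M"] bayes_range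
    by (simp add: ennreal_leI)
qed

lemma hinge_risk_opt_eq: "hinge_risk_opt P M = hinge_risk P (bayes P M)"
proof (rule antisym)
  show "hinge_risk_opt P M \<le> hinge_risk P (bayes P M)"
    unfolding hinge_risk_opt_def by (rule INF_lower) simp
  show "hinge_risk P (bayes P M) \<le> hinge_risk_opt P M"
    unfolding hinge_risk_opt_def
  proof (rule INF_greatest)
    fix f :: "'a \<Rightarrow> real"
    assume [measurable]: "f \<in> borel_measurable M"
    define clip where "clip x = max (-1) (min 1 (f x))" for x
    have [measurable]: "clip \<in> borel_measurable M"
      unfolding clip_def by measurable
    have "hinge_risk P (bayes P M) \<le> hinge_risk P clip"
      by (rule hinge_risk_bayes_le) (auto simp: clip_def)
    also have "\<dots> \<le> hinge_risk P f"
      unfolding hinge_risk_def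
      by (intro nn_integral_mono ennreal_leI) (auto simp: clip_def max_def min_def dest!: snd_cases)
    finally show "hinge_risk P (bayes P M) \<le> hinge_risk P f" .
  qed
qed

lemma excess_hinge_risk_eq:
  assumes [measurable]: "f \<in> borel_measurable M" and f_range: "\<And>x. x \<in> space M \<Longrightarrow> f x \<in> {-1..1}"
  shows "enn2real (hinge_risk P f) - enn2real (hinge_risk_opt P M)
    = (\<integral>x. \<bar>2 * \<eta> x - 1\<bar> * \<bar>f x - bayes P M x\<bar> \<partial>PX)"
proof -
  have "integrable PX (\<lambda>x. (2 * \<eta> x - 1) * f x)"
    using f_range by (intro integrable_margin_mult[where B=1]) auto
  moreover have "integrable PX (\<lambda>x. (2 * \<eta> x - 1) * bayes P M x)"
    using bayes_range by (intro integrable_margin_mult[where B=1]) auto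
  ultimately have "enn2real (hinge_risk P f) - enn2real (hinge_risk_opt P M)
      = (\<integral>x. (2 * \<eta> x - 1) * (bayes P M x - f x) \<partial>PX)"
    using enn2real_hinge_risk[OF assms] enn2real_hinge_risk[of "bayes P M"] bayes_range
    by (simp add: hinge_risk_opt_eq right_diff_distrib)
  also have "\<dots> = (\<integral>x. \<bar>2 * \<eta> x - 1\<bar> * \<bar>f x - bayes P M x\<bar> \<partial>PX)"
    using f_range by (intro Bochner_Integration.integral_cong refl abs_margin_mult_dist_bayes[symmetric]) auto
  finally show ?thesis .
qed

lemma risk_eq_half_hinge_risk:
  assumes [measurable]: "f \<in> borel_measurable M" and f_range: "\<And>x. x \<in> space M \<Longrightarrow> f x \<in> {-1, 1}"
  shows "risk P f = enn2real (hinge_risk P f) / 2"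
proof -
  have f_range': "f x \<in> {-1..1}" if "x \<in> space M" for x
    using f_range[OF that] by auto
  define S where "S = {z \<in> space P. snd z \<noteq> f (fst z)}"
  have [measurable]: "S \<in> sets P"
    unfolding S_def by measurable
  have "risk P f = (\<integral>z. indicator S z \<partial>P)"
    by (simp add: risk_def S_def)
  also have "\<dots> = (\<integral>z. (1 - snd z * f (fst z)) / 2 \<partial>P)"
  proof (rule Bochner_Integration.integral_cong)
    fix z assume z: "z \<in> space P"
    then have "snd z \<in> {-1, 1}" "f (fst z) \<in> {-1, 1}"
      using snd_cases f_range fst_in_space_M by auto
    with z show "indicator S z = (1 - snd z * f (fst z)) / 2"
      by (auto simp: S_def)
  qed simp
  also have "\<dots> = enn2real (hinge_risk P f) / 2"
    using hinge_risk_eq_integral[OF assms(1) f_range'] by simp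
  finally show ?thesis .
qed

lemma excess_risk_eq:
  assumes [measurable]: "f \<in> borel_measurable M" and f_range: "\<And>x. x \<in> space M \<Longrightarrow> f x \<in> {-1, 1}"
  shows "risk P f - bayes_risk P M = (\<integral>x. \<bar>2 * \<eta> x - 1\<bar> * \<bar>f x - bayes P M x\<bar> \<partial>PX) / 2"
proof -
  have "risk P f - bayes_risk P M = (enn2real (hinge_risk P f) - enn2real (hinge_risk_opt P M)) / 2"
    unfolding bayes_risk_def hinge_risk_opt_eq
    using risk_eq_half_hinge_risk[OF assms] risk_eq_half_hinge_risk[OF measurable_bayes bayes_in_labels]
    by (simp add: diff_divide_distrib)
  also have "\<dots> = (\<integral>x. \<bar>2 * \<eta> x - 1\<bar> * \<bar>f x - bayes P M x\<bar> \<partial>PX) / 2"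
    using f_range by (subst excess_hinge_risk_eq) force+
  finally show ?thesis .
qed

lemma dist_bayes_eq:
  "f \<in> borel_measurable M \<Longrightarrow> dist_bayes P M f = (\<integral>x. \<bar>f x - bayes P M x\<bar> \<partial>PX)"
  unfolding dist_bayes_def by (simp add: integral_marginal)

lemma MAH_imp_MA:
  assumes "MAH P M \<kappa>"
  shows "MA P M \<kappa>"
proof -
  obtain c where "0 < c" and hinge_margin: "\<And>f. f \<in> borel_measurable M \<Longrightarrow> (\<forall>x \<in> space M. f x \<in> {-1..1}) \<Longrightarrow>
      dist_bayes P M f \<le> c * (enn2real (hinge_risk P f) - enn2real (hinge_risk_opt P M)) powr (1 / \<kappa>)"
    using assms unfolding MAH_def by blast
  show ?thesis
    unfolding MA_def
  proof (intro exI[of _ "c * 2 powr (1 / \<kappa>)"] conjI ballI impI)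
    show "0 < c * 2 powr (1 / \<kappa>)"
      using \<open>0 < c\<close> by simp
    fix f :: "'a \<Rightarrow> real"
    assume f: "f \<in> borel_measurable M" and f_range: "\<forall>x \<in> space M. f x \<in> {-1, 1}"
    moreover have f_range': "\<forall>x \<in> space M. f x \<in> {-1..1}"
      using f_range by auto
    ultimately have excess: "enn2real (hinge_risk P f) - enn2real (hinge_risk_opt P M) = 2 * (risk P f - bayes_risk P M)"
      by (simp add: excess_risk_eq excess_hinge_risk_eq)
    have "dist_bayes P M f \<le> c * (enn2real (hinge_risk P f) - enn2real (hinge_risk_opt P M)) powr (1 / \<kappa>)"
      by (rule hinge_margin[OF f f_range'])
    also have "\<dots> = c * 2 powr (1 / \<kappa>) * (risk P f - bayes_risk P M) powr (1 / \<kappa>)"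
      by (simp only: excess powr_mult mult.assoc)
    finally show "dist_bayes P M f \<le> c * 2 powr (1 / \<kappa>) * (risk P f - bayes_risk P M) powr (1 / \<kappa>)" .
  qed
qed

lemma MA_imp_set_margin:
  assumes "MA P M \<kappa>"
  obtains c where "0 < c"
    and "\<And>S. S \<in> sets M \<Longrightarrow> measure PX S \<le> c * (\<integral>x. \<bar>2 * \<eta> x - 1\<bar> * indicator S x \<partial>PX) powr (1 / \<kappa>)"
proof -
  obtain c0 where "0 < c0" and margin: "\<And>f. f \<in> borel_measurable M \<Longrightarrow> (\<forall>x \<in> space M. f x \<in> {-1, 1}) \<Longrightarrow>
      dist_bayes P M f \<le> c0 * (risk P f - bayes_risk P M) powr (1 / \<kappa>)"
    using assms unfolding MA_def by blast
  show ?thesis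
  proof (rule that[of "c0 / 2"])
    show "0 < c0 / 2"
      using \<open>0 < c0\<close> by simp
    fix S assume [measurable]: "S \<in> sets M"
    define f where "f x = (if x \<in> S then - bayes P M x else bayes P M x)" for x
    have f_meas: "f \<in> borel_measurable M"
      unfolding f_def by measurable
    have f_range: "\<forall>x \<in> space M. f x \<in> {-1, 1}"
      using bayes_in_labels by (auto simp: f_def)
    have dist: "\<bar>f x - bayes P M x\<bar> = 2 * indicator S x" for x
      using bayes_in_labels[of x] by (auto simp: f_def)
    have "dist_bayes P M f = 2 * measure PX S"
      using f_meas by (simp add: dist_bayes_eq dist)
    moreover have "risk P f - bayes_risk P M = (\<integral>x. \<bar>2 * \<eta> x - 1\<bar> * indicator S x \<partial>PX)"
      using f_meas f_range by (simp add: excess_risk_eq dist mult.left_commute)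
    ultimately show "measure PX S \<le> c0 / 2 * (\<integral>x. \<bar>2 * \<eta> x - 1\<bar> * indicator S x \<partial>PX) powr (1 / \<kappa>)"
      using margin[OF f_meas f_range] by simp
  qed
qed

lemma MA_imp_MAH:
  assumes "MA P M \<kappa>" and "1 \<le> \<kappa>"
  shows "MAH P M \<kappa>"
proof -
  obtain c where "0 < c"
    and set_margin: "\<And>S. S \<in> sets PX \<Longrightarrow> measure PX S \<le> c * (\<integral>x. \<bar>2 * \<eta> x - 1\<bar> * indicator S x \<partial>PX) powr (1 / \<kappa>)"
    using MA_imp_set_margin[OF assms(1)] by (metis sets_PX)
  have "(\<lambda>x. \<bar>2 * \<eta> x - 1\<bar>) \<in> borel_measurable PX"
    by measurable
  then obtain C where "0 < C" and bounded_margin: "\<And>g. g \<in> borel_measurable PX \<Longrightarrow> (\<And>x. x \<in> space PX \<Longrightarrow> 0 \<le> g x \<and> g x \<le> 2) \<Longrightarrow>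
      (\<integral>x. g x \<partial>PX) \<le> C * (\<integral>x. \<bar>2 * \<eta> x - 1\<bar> * g x \<partial>PX) powr (1 / \<kappa>)"
    using PX.set_margin_imp_bounded_margin[where B=2, OF _ integrable_abs_margin _ _ \<open>0 < c\<close> _ _ set_margin] assms(2)
    by auto
  show ?thesis
    unfolding MAH_def
  proof (intro exI[of _ C] conjI ballI impI)
    fix f :: "'a \<Rightarrow> real"
    assume f[measurable]: "f \<in> borel_measurable M" and f_range: "\<forall>x \<in> space M. f x \<in> {-1..1}"
    have "(\<integral>x. \<bar>f x - bayes P M x\<bar> \<partial>PX) \<le> C * (\<integral>x. \<bar>2 * \<eta> x - 1\<bar> * \<bar>f x - bayes P M x\<bar> \<partial>PX) powr (1 / \<kappa>)"
    proof (rule bounded_margin)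
      fix x assume "x \<in> space PX"
      then show "0 \<le> \<bar>f x - bayes P M x\<bar> \<and> \<bar>f x - bayes P M x\<bar> \<le> 2"
        using f_range bayes_range[of x] by auto
    qed simp
    then show "dist_bayes P M f \<le> C * (enn2real (hinge_risk P f) - enn2real (hinge_risk_opt P M)) powr (1 / \<kappa>)"
      using f_range by (simp add: dist_bayes_eq excess_hinge_risk_eq)
  qed fact
qed

end

theorem proposition1:
  fixes M :: "'a measure" and P :: "('a \<times> real) measure" and \<kappa> :: real
  assumes "prob_space P"
    and "sets P = sets (M \<Otimes>\<^sub>M count_space {-1, 1})"
    and "1 \<le> \<kappa>"
  shows "MA P M \<kappa> \<longleftrightarrow> MAH P M \<kappa>"
proof -
  interpret binary_classification M P
    using assms(1,2) by (rule binary_classification.intro)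
  show ?thesis
    using MA_imp_MAH MAH_imp_MA assms(3) by blast
qed

end
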